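(* Let $N\ge 2$ and let $(\nu_r^{(1:N)})_{r\ge1}$ be vectors of non-negative integers with $\sum_i \nu_r^{(i)} = N$, with $c_N$ and $\tau_N$ as defined below, and assume $\tau_N(u)<\infty$ for all $u\ge0$. Fix real $t > s > 0$ and $l \in \mathbb{N}$. Then (a) $\displaystyle\sum_{\substack{s_1,\dots,s_l = \tau_N(s)+1\\ \text{all distinct}}}^{\tau_N(t)} \prod_{j=1}^l c_N(s_j) \leq (t-s+1)^l \leq (t+1)^l$; (b) $\displaystyle\Bigg[(t-s)^l - \Bigg(c_N(\tau_N(s)) + \binom{l}{2}\sum_{r=\tau_N(s)+1}^{\tau_N(t)} c_N(r)^2\Bigg)(t+1)^l\Bigg]\mathbb{1}_{\{c_N(\tau_N(s)) \leq t-s\}} \leq \sum_{\substack{s_1,\dots,s_l = \tau_N(s)+1\\ \text{all distinct}}}^{\tau_N(t)} \prod_{j=1}^l c_N(s_j) \leq (t-s)^l + c_N(\tau_N(t))(t+1)^l.$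
   Context: $c_N(r) := \frac{1}{(N)_2}\sum_{i=1}^N (\nu_r^{(i)})_2$ with $(x)_k$ the falling factorial; $\tau_N(u) := \inf\{s\in\{0,1,2,\dots\} : \sum_{r=1}^s c_N(r) \ge u\}$. *)

theory Defs
  imports Main Complex_Main
begin

definition ffact2 :: "real \<Rightarrow> real" where
  "ffact2 x = x * (x - 1)"

text \<open>nu r i is the i-th component of the vector nu_r^(1:N).\<close>
definition cN :: "nat \<Rightarrow> (nat \<Rightarrow> nat \<Rightarrow> nat) \<Rightarrow> nat \<Rightarrow> real" where
  "cN N nu r = (\<Sum>i=1..N. ffact2 (real (nu r i))) / ffact2 (real N)"

definition tauN :: "nat \<Rightarrow> (nat \<Rightarrow> nat \<Rightarrow> nat) \<Rightarrow> real \<Rightarrow> nat" where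
  "tauN N nu u = Inf {s::nat. (\<Sum>r=1..s. cN N nu r) \<ge> u}"

text \<open>Sum over all tuples (s_1,...,s_l) of pairwise distinct indices in {a..b}
  of prod_j c(s_j); tuples are represented as distinct lists of length l.\<close>
definition distinct_tuple_sum :: "(nat \<Rightarrow> real) \<Rightarrow> nat \<Rightarrow> nat \<Rightarrow> nat \<Rightarrow> real" where
  "distinct_tuple_sum c l a b =
     (\<Sum>xs\<in>{xs. length xs = l \<and> distinct xs \<and> set xs \<subseteq> {a..b}}. \<Prod>j<l. c (xs ! j))"

end

(*
  Let T be the sum of c_N over the window {tau_N(s)+1..tau_N(t)}. Summing prod_j c(s_j) over all
  l-tuples of the window gives T^l, and the tuples with a repeated entry contribute at most
  binom(l,2) (sum_r c(r)^2) T^(l-2). Since the partial sums of c_N overshoot a level by less than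
  one step, T lies strictly between t - s - c_N(tau_N(s)) and t - s + c_N(tau_N(t)). Finally,
  convexity of y^l on [x, x + 1] turns a perturbation of x by some c in [0, 1] into an additive
  error of at most c (x + 1)^l.
*)
theory Submission
  imports Defs
begin

lemma sum_prod_lists_length:
  fixes f :: "nat \<Rightarrow> 'a \<Rightarrow> 'b::comm_semiring_1"
  shows "(\<Sum>xs | set xs \<subseteq> A \<and> length xs = l. \<Prod>j<l. f j (xs ! j)) = (\<Prod>j<l. \<Sum>a\<in>A. f j a)"
proof (induction l arbitrary: f)
  case 0
  then show ?case by (simp cong: conj_cong)
next
  case (Suc l)
  have "inj_on (\<lambda>(xs, x). x # xs) X" for X :: "('a list \<times> 'a) set"
    by (auto simp: inj_on_def)
  then have "(\<Sum>xs | set xs \<subseteq> A \<and> length xs = Suc l. \<Prod>j<Suc l. f j (xs ! j))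
      = (\<Sum>(ys, x) \<in> {ys. set ys \<subseteq> A \<and> length ys = l} \<times> A. f 0 x * (\<Prod>j<l. f (Suc j) (ys ! j)))"
    by (simp add: lists_length_Suc_eq sum.reindex prod.lessThan_Suc_shift case_prod_unfold
        del: prod.lessThan_Suc)
  also have "\<dots> = (\<Sum>x\<in>A. f 0 x) * (\<Prod>j<l. \<Sum>a\<in>A. f (Suc j) a)"
    by (simp add: sum.cartesian_product[symmetric] sum_distrib_left sum_distrib_right
        flip: Suc.IH)
  finally show ?case
    by (simp only: prod.lessThan_Suc_shift)
qed

lemma prod_if_eq_power:
  fixes q p :: "'a::comm_monoid_mult"
  assumes "k < l"
  shows "(\<Prod>j<l. if j = k then q else p) = q * p ^ (l - 1)"
proof -
  have "{..<l} \<inter> - {k} = {..<l} - {k}" by blast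
  then show ?thesis
    using assms by (simp add: prod.If_cases Int_absorb2)
qed

lemma sum_prod_lists_length_mult_nth:
  fixes c :: "'a \<Rightarrow> 'b::comm_semiring_1"
  assumes "k < l"
  shows "(\<Sum>xs | set xs \<subseteq> A \<and> length xs = l. (\<Prod>j<l. c (xs ! j)) * c (xs ! k))
    = (\<Sum>a\<in>A. c a ^ 2) * sum c A ^ (l - 1)"
proof -
  let ?g = "\<lambda>j a. if j = k then c a ^ 2 else c a"
  have "(\<Prod>j<l. c (xs ! j)) * c (xs ! k) = (\<Prod>j<l. ?g j (xs ! j))" for xs
  proof -
    have "(\<Prod>j<l. ?g j (xs ! j)) = (\<Prod>j<l. c (xs ! j) * (if j = k then c (xs ! j) else 1))"
      by (rule prod.cong) (simp_all add: power2_eq_square)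
    then show ?thesis
      using assms by (simp add: prod.distrib)
  qed
  then have "(\<Sum>xs | set xs \<subseteq> A \<and> length xs = l. (\<Prod>j<l. c (xs ! j)) * c (xs ! k))
      = (\<Sum>xs | set xs \<subseteq> A \<and> length xs = l. \<Prod>j<l. ?g j (xs ! j))"
    by (rule sum.cong[OF refl])
  also have "\<dots> = (\<Prod>j<l. \<Sum>a\<in>A. ?g j a)"
    by (rule sum_prod_lists_length)
  also have "\<dots> = (\<Prod>j<l. if j = k then (\<Sum>a\<in>A. c a ^ 2) else sum c A)"
    by (rule prod.cong) simp_all
  also have "\<dots> = (\<Sum>a\<in>A. c a ^ 2) * sum c A ^ (l - 1)"
    using assms by (rule prod_if_eq_power)
  finally show ?thesis .
qed

lemma sum_prod_distinct_lists_Suc: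
  fixes c :: "'a \<Rightarrow> 'b::comm_ring_1"
  assumes "finite A"
  shows "(\<Sum>xs | length xs = Suc l \<and> distinct xs \<and> set xs \<subseteq> A. \<Prod>j<Suc l. c (xs ! j))
    = (\<Sum>ys | length ys = l \<and> distinct ys \<and> set ys \<subseteq> A.
         (\<Prod>j<l. c (ys ! j)) * (sum c A - (\<Sum>k<l. c (ys ! k))))"
proof -
  let ?D = "{ys. length ys = l \<and> distinct ys \<and> set ys \<subseteq> A}"
  have "finite ?D"
    by (rule finite_subset[OF _ finite_lists_length_eq[OF assms, of l]]) auto
  have "{xs. length xs = Suc l \<and> distinct xs \<and> set xs \<subseteq> A}
      = (\<lambda>(ys, x). x # ys) ` (SIGMA ys:?D. A - set ys)"
    by (auto simp: length_Suc_conv image_iff)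
  moreover have "inj_on (\<lambda>(ys, x). x # ys) X" for X :: "('a list \<times> 'a) set"
    by (auto simp: inj_on_def)
  ultimately have "(\<Sum>xs | length xs = Suc l \<and> distinct xs \<and> set xs \<subseteq> A. \<Prod>j<Suc l. c (xs ! j))
      = (\<Sum>(ys, x) \<in> (SIGMA ys:?D. A - set ys). (\<Prod>j<l. c (ys ! j)) * c x)"
    by (simp add: sum.reindex prod.lessThan_Suc_shift case_prod_unfold mult.commute
        del: prod.lessThan_Suc)
  also have "\<dots> = (\<Sum>ys\<in>?D. (\<Prod>j<l. c (ys ! j)) * sum c (A - set ys))"
    using \<open>finite ?D\<close> assms by (simp add: sum.Sigma[symmetric] sum_distrib_left)
  also have "\<dots> = (\<Sum>ys\<in>?D. (\<Prod>j<l. c (ys ! j)) * (sum c A - (\<Sum>k<l. c (ys ! k))))"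
  proof (rule sum.cong[OF refl])
    fix ys assume "ys \<in> ?D"
    then have "sum c (set ys) = (\<Sum>k<l. c (ys ! k))"
      by (simp add: sum_list_distinct_conv_sum_set[symmetric] sum_list_sum_nth atLeast0LessThan)
    with \<open>ys \<in> ?D\<close> show "(\<Prod>j<l. c (ys ! j)) * sum c (A - set ys)
        = (\<Prod>j<l. c (ys ! j)) * (sum c A - (\<Sum>k<l. c (ys ! k)))"
      using assms by (simp add: sum_diff)
  qed
  finally show ?thesis .
qed

lemma sum_prod_distinct_lists_le_power:
  fixes c :: "'a \<Rightarrow> 'b::linordered_idom"
  assumes "finite A" and "\<And>a. a \<in> A \<Longrightarrow> 0 \<le> c a"
  shows "(\<Sum>xs | length xs = l \<and> distinct xs \<and> set xs \<subseteq> A. \<Prod>j<l. c (xs ! j)) \<le> sum c A ^ l"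
proof -
  have "(\<Sum>xs | length xs = l \<and> distinct xs \<and> set xs \<subseteq> A. \<Prod>j<l. c (xs ! j))
      \<le> (\<Sum>xs | set xs \<subseteq> A \<and> length xs = l. \<Prod>j<l. c (xs ! j))"
    using assms by (intro sum_mono2 finite_lists_length_eq prod_nonneg) (auto simp: subset_iff)
  then show ?thesis
    using sum_prod_lists_length[where f = "\<lambda>_. c"] by simp
qed

lemma power_sum_minus_sum_prod_distinct_lists_le:
  fixes c :: "'a \<Rightarrow> 'b::linordered_idom"
  assumes "finite A" and nonneg: "\<And>a. a \<in> A \<Longrightarrow> 0 \<le> c a"
  shows "sum c A ^ l - (\<Sum>xs | length xs = l \<and> distinct xs \<and> set xs \<subseteq> A. \<Prod>j<l. c (xs ! j))
    \<le> of_nat (l choose 2) * (\<Sum>a\<in>A. c a ^ 2) * sum c A ^ (l - 2)"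
proof (induction l)
  case 0
  have "{xs. length xs = 0 \<and> distinct xs \<and> set xs \<subseteq> A} = {[]}" by auto
  then show ?case by (simp add: numeral_2_eq_2 del: length_0_conv)
next
  case (Suc l)
  let ?T = "sum c A" and ?Q = "\<Sum>a\<in>A. c a ^ 2" and ?P = "\<lambda>ys. \<Prod>j<l. c (ys ! j)"
  let ?D = "{ys. length ys = l \<and> distinct ys \<and> set ys \<subseteq> A}"
  define E where "E = (\<Sum>ys\<in>?D. ?P ys * (\<Sum>k<l. c (ys ! k)))"
  have "0 \<le> ?T" "0 \<le> ?Q"
    using nonneg by (auto intro: sum_nonneg)
  have "E \<le> (\<Sum>ys | set ys \<subseteq> A \<and> length ys = l. ?P ys * (\<Sum>k<l. c (ys ! k)))"
    unfolding E_def using assms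
    by (intro sum_mono2 finite_lists_length_eq mult_nonneg_nonneg prod_nonneg sum_nonneg)
      (auto simp: subset_iff)
  also have "\<dots> = (\<Sum>k<l. \<Sum>ys | set ys \<subseteq> A \<and> length ys = l. ?P ys * c (ys ! k))"
    by (simp add: sum_distrib_left sum.swap[where A = "{..<l}"])
  also have "\<dots> = of_nat l * ?Q * ?T ^ (l - 1)"
    by (simp add: sum_prod_lists_length_mult_nth)
  finally have E: "E \<le> of_nat l * ?Q * ?T ^ (l - 1)" .
  have "?T ^ Suc l - (\<Sum>xs | length xs = Suc l \<and> distinct xs \<and> set xs \<subseteq> A. \<Prod>j<Suc l. c (xs ! j))
      = ?T * (?T ^ l - (\<Sum>ys\<in>?D. ?P ys)) + E"
    unfolding sum_prod_distinct_lists_Suc[OF \<open>finite A\<close>] E_def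
    by (simp add: algebra_simps sum_subtractf sum_distrib_left)
  also have "\<dots> \<le> ?T * (of_nat (l choose 2) * ?Q * ?T ^ (l - 2)) + of_nat l * ?Q * ?T ^ (l - 1)"
    using Suc.IH E \<open>0 \<le> ?T\<close> by (intro add_mono mult_left_mono)
  also have "\<dots> = of_nat (Suc l choose 2) * ?Q * ?T ^ (Suc l - 2)"
  proof (cases "l < 2")
    case True
    then have "l = 0 \<or> l = 1" by auto
    then show ?thesis by (auto simp: numeral_2_eq_2)
  next
    case False
    then have "?T * ?T ^ (l - 2) = ?T ^ (l - 1)"
      by (simp flip: power_Suc add: Suc_diff_Suc numeral_2_eq_2)
    then show ?thesis
      by (simp add: numeral_2_eq_2 algebra_simps)
  qed
  finally show ?case .
qed

lemma power_add_le_convex_combination: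
  fixes x c :: "'a::linordered_idom"
  assumes "0 \<le> x" "0 \<le> c" "c \<le> 1"
  shows "(x + c) ^ n \<le> (1 - c) * x ^ n + c * (x + 1) ^ n"
proof (induction n)
  case 0
  then show ?case by simp
next
  case (Suc n)
  have "x ^ n \<le> (x + 1) ^ n"
    using assms by (intro power_mono) auto
  then have "0 \<le> c * (1 - c) * ((x + 1) ^ n - x ^ n)"
    using assms by simp
  moreover have "(x + c) ^ Suc n \<le> (x + c) * ((1 - c) * x ^ n + c * (x + 1) ^ n)"
    using Suc.IH assms by (simp add: mult_left_mono)
  \<comment> \<open>the right-hand side equals the claimed bound minus the term shown nonnegative above\<close>
  ultimately show ?case
    by (simp add: algebra_simps)
qed

lemma power_add_le_power_plus:
  fixes x c M :: "'a::linordered_idom"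
  assumes "0 \<le> x" "0 \<le> c" "c \<le> 1" "x + 1 \<le> M"
  shows "(x + c) ^ n \<le> x ^ n + c * M ^ n"
proof -
  have "(x + 1) ^ n \<le> M ^ n"
    using assms by (intro power_mono) auto
  then have "c * (x + 1) ^ n \<le> c * M ^ n"
    using assms by (simp add: mult_left_mono)
  moreover have "0 \<le> c * x ^ n"
    using assms by simp
  ultimately show ?thesis
    using power_add_le_convex_combination[OF assms(1-3), of n] by (simp add: algebra_simps)
qed

lemma sum_prod_distinct_lists_upper_bounds:
  fixes c :: "'a \<Rightarrow> 'b::linordered_idom"
  assumes "finite A" "\<And>a. a \<in> A \<Longrightarrow> 0 \<le> c a"
    and "0 \<le> x" "0 \<le> \<beta>" "\<beta> \<le> 1" "sum c A \<le> x + \<beta>" "x + 1 \<le> M"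
  shows "(\<Sum>xs | length xs = l \<and> distinct xs \<and> set xs \<subseteq> A. \<Prod>j<l. c (xs ! j)) \<le> (x + 1) ^ l"
    and "(\<Sum>xs | length xs = l \<and> distinct xs \<and> set xs \<subseteq> A. \<Prod>j<l. c (xs ! j)) \<le> x ^ l + \<beta> * M ^ l"
proof -
  have D_le: "(\<Sum>xs | length xs = l \<and> distinct xs \<and> set xs \<subseteq> A. \<Prod>j<l. c (xs ! j)) \<le> (x + \<beta>) ^ l"
    using sum_prod_distinct_lists_le_power[OF assms(1,2)] assms(2,6)
    by (meson order_trans power_mono sum_nonneg)
  then show "(\<Sum>xs | length xs = l \<and> distinct xs \<and> set xs \<subseteq> A. \<Prod>j<l. c (xs ! j)) \<le> (x + 1) ^ l"
    using assms(3-5) by (meson order_trans power_mono add_left_mono add_nonneg_nonneg)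
  show "(\<Sum>xs | length xs = l \<and> distinct xs \<and> set xs \<subseteq> A. \<Prod>j<l. c (xs ! j)) \<le> x ^ l + \<beta> * M ^ l"
    using D_le power_add_le_power_plus[OF assms(3-5,7)] by (rule order_trans)
qed

lemma sum_prod_distinct_lists_lower_bound:
  fixes c :: "'a \<Rightarrow> 'b::linordered_idom"
  assumes "finite A" "\<And>a. a \<in> A \<Longrightarrow> 0 \<le> c a"
    and "0 \<le> \<alpha>" "\<alpha> \<le> 1" "\<alpha> \<le> x" "x - \<alpha> \<le> sum c A" "sum c A \<le> M" "x + 1 \<le> M"
  shows "x ^ l - (\<alpha> + of_nat (l choose 2) * (\<Sum>a\<in>A. c a ^ 2)) * M ^ l
    \<le> (\<Sum>xs | length xs = l \<and> distinct xs \<and> set xs \<subseteq> A. \<Prod>j<l. c (xs ! j))"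
proof -
  let ?T = "sum c A" and ?Q = "\<Sum>a\<in>A. c a ^ 2"
  have "0 \<le> ?T" "0 \<le> ?Q" "1 \<le> M"
    using assms by (auto intro: sum_nonneg)
  then have "?T ^ (l - 2) \<le> M ^ l"
    using assms(7) by (meson order_trans power_mono power_increasing diff_le_self)
  have "x ^ l = ((x - \<alpha>) + \<alpha>) ^ l"
    by simp
  also have "\<dots> \<le> (x - \<alpha>) ^ l + \<alpha> * M ^ l"
    using assms by (intro power_add_le_power_plus) auto
  also have "(x - \<alpha>) ^ l \<le> ?T ^ l"
    using assms by (intro power_mono) auto
  also have "?T ^ l \<le> (\<Sum>xs | length xs = l \<and> distinct xs \<and> set xs \<subseteq> A. \<Prod>j<l. c (xs ! j))
      + of_nat (l choose 2) * ?Q * ?T ^ (l - 2)"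
    using power_sum_minus_sum_prod_distinct_lists_le[OF assms(1,2)] by (simp add: algebra_simps)
  also have "\<dots> \<le> (\<Sum>xs | length xs = l \<and> distinct xs \<and> set xs \<subseteq> A. \<Prod>j<l. c (xs ! j))
      + of_nat (l choose 2) * ?Q * M ^ l"
    using \<open>?T ^ (l - 2) \<le> M ^ l\<close> \<open>0 \<le> ?Q\<close> by (simp add: mult_left_mono)
  finally show ?thesis
    by (simp add: algebra_simps)
qed

lemma cN_nonneg:
  assumes "N \<ge> 2"
  shows "0 \<le> cN N nu r"
proof -
  have "0 \<le> ffact2 (real n)" for n
    unfolding ffact2_def by (cases n) auto
  moreover have "0 < ffact2 (real N)"
    using assms unfolding ffact2_def by simp
  ultimately show ?thesis
    unfolding cN_def by (intro divide_nonneg_pos sum_nonneg)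
qed

lemma cN_le_1:
  assumes "N \<ge> 2" and rowsum: "(\<Sum>i=1..N. nu r i) = N"
  shows "cN N nu r \<le> 1"
proof -
  have "ffact2 (real (nu r i)) \<le> (real N - 1) * real (nu r i)" if "i \<in> {1..N}" for i
  proof -
    have "real (nu r i) \<le> real N"
      using member_le_sum[OF that, of "nu r"] rowsum by simp
    then show ?thesis
      using mult_left_mono[of "real (nu r i) - 1" "real N - 1" "real (nu r i)"]
      unfolding ffact2_def by (simp add: mult.commute)
  qed
  then have "(\<Sum>i=1..N. ffact2 (real (nu r i))) \<le> (\<Sum>i=1..N. (real N - 1) * real (nu r i))"
    by (rule sum_mono)
  also have "\<dots> = ffact2 (real N)"
    using rowsum unfolding ffact2_def by (simp flip: sum_distrib_left of_nat_sum add: mult.commute)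
  finally show ?thesis
    using assms unfolding cN_def ffact2_def by simp
qed

lemma tauN_le:
  assumes "u \<le> (\<Sum>r=1..m. cN N nu r)"
  shows "tauN N nu u \<le> m"
  using assms unfolding tauN_def by (simp add: cInf_lower)

lemma le_sum_tauN:
  assumes "\<exists>m. u \<le> (\<Sum>r=1..m. cN N nu r)"
  shows "u \<le> (\<Sum>r=1..tauN N nu u. cN N nu r)"
  using assms unfolding tauN_def by (metis Inf_nat_def1 empty_iff mem_Collect_eq)

lemma tauN_ge_1:
  assumes "0 < u" "\<exists>m. u \<le> (\<Sum>r=1..m. cN N nu r)"
  shows "1 \<le> tauN N nu u"
  using le_sum_tauN[OF assms(2)] assms(1) by (cases "tauN N nu u") auto

lemma sum_tauN_less:
  assumes "0 < u" "\<exists>m. u \<le> (\<Sum>r=1..m. cN N nu r)"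
  shows "(\<Sum>r=1..tauN N nu u. cN N nu r) < u + cN N nu (tauN N nu u)"
proof -
  obtain m where m: "tauN N nu u = Suc m"
    using tauN_ge_1[OF assms] by (cases "tauN N nu u") auto
  have "\<not> u \<le> (\<Sum>r=1..m. cN N nu r)"
  proof
    assume "u \<le> (\<Sum>r=1..m. cN N nu r)"
    then have "tauN N nu u \<le> m"
      by (rule tauN_le)
    with m show False
      by simp
  qed
  then show ?thesis
    using m by simp
qed

lemma sum_between_tauN_bounds:
  assumes "0 < s" "s < t" and t_reached: "\<exists>m. t \<le> (\<Sum>r=1..m. cN N nu r)"
  shows "t - s - cN N nu (tauN N nu s) < (\<Sum>r = tauN N nu s + 1..tauN N nu t. cN N nu r)"
    and "(\<Sum>r = tauN N nu s + 1..tauN N nu t. cN N nu r) < t - s + cN N nu (tauN N nu t)"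
proof -
  let ?S = "\<lambda>m. \<Sum>r=1..m. cN N nu r" and ?a = "tauN N nu s" and ?b = "tauN N nu t"
  have s_reached: "\<exists>m. s \<le> ?S m"
    using t_reached \<open>s < t\<close> by (meson order.trans less_imp_le)
  have "t \<le> ?S ?b"
    using t_reached by (rule le_sum_tauN)
  then have "?a \<le> ?b"
    using \<open>s < t\<close> by (intro tauN_le) simp
  then have "?S ?b = ?S ?a + (\<Sum>r = ?a + 1..?b. cN N nu r)"
    using sum.ub_add_nat[of 1 ?a "cN N nu" "?b - ?a"] by simp
  moreover have "s \<le> ?S ?a" "?S ?a < s + cN N nu ?a"
    using le_sum_tauN[OF s_reached] sum_tauN_less[OF \<open>0 < s\<close> s_reached] by auto
  moreover have "?S ?b < t + cN N nu ?b"
    using \<open>0 < s\<close> \<open>s < t\<close> t_reached by (intro sum_tauN_less) auto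
  ultimately show "t - s - cN N nu ?a < (\<Sum>r = ?a + 1..?b. cN N nu r)"
    and "(\<Sum>r = ?a + 1..?b. cN N nu r) < t - s + cN N nu ?b"
    using \<open>t \<le> ?S ?b\<close> by linarith+
qed

theorem lemma4:
  fixes N :: nat and nu :: "nat \<Rightarrow> nat \<Rightarrow> nat" and s t :: real and l :: nat
  assumes N2: "N \<ge> 2"
    and rowsum: "\<And>r. r \<ge> 1 \<Longrightarrow> (\<Sum>i=1..N. nu r i) = N"
    and tau_fin: "\<And>u. u \<ge> 0 \<Longrightarrow> \<exists>m::nat. (\<Sum>r=1..m. cN N nu r) \<ge> u"
    and st: "0 < s" "s < t"
  shows "(distinct_tuple_sum (cN N nu) l (tauN N nu s + 1) (tauN N nu t) \<le> (t - s + 1) ^ l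
         \<and> (t - s + 1) ^ l \<le> (t + 1) ^ l)
       \<and> ((if cN N nu (tauN N nu s) \<le> t - s then
            (t - s) ^ l - (cN N nu (tauN N nu s)
               + real (l choose 2) * (\<Sum>r = tauN N nu s + 1..tauN N nu t. (cN N nu r)\<^sup>2)) * (t + 1) ^ l
          else 0)
         \<le> distinct_tuple_sum (cN N nu) l (tauN N nu s + 1) (tauN N nu t)
       \<and> distinct_tuple_sum (cN N nu) l (tauN N nu s + 1) (tauN N nu t)
         \<le> (t - s) ^ l + cN N nu (tauN N nu t) * (t + 1) ^ l)"
proof -
  let ?c = "cN N nu" and ?a = "tauN N nu s" and ?b = "tauN N nu t"
  let ?A = "{?a + 1..?b}"
  have reached: "\<exists>m. u \<le> (\<Sum>r=1..m. ?c r)" if "u \<in> {s, t}" for u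
    using tau_fin that st by auto
  have c_nonneg: "\<And>r. 0 \<le> ?c r"
    using N2 by (rule cN_nonneg)
  have "1 \<le> tauN N nu u" if "u \<in> {s, t}" for u
    using tauN_ge_1[OF _ reached[OF that]] that st by auto
  then have ca: "?c ?a \<le> 1" and cb: "?c ?b \<le> 1"
    by (auto intro!: cN_le_1[OF N2] rowsum)
  have lower: "t - s - ?c ?a \<le> sum ?c ?A" and upper: "sum ?c ?A \<le> t - s + ?c ?b"
    using sum_between_tauN_bounds[OF st reached] by (auto intro: less_imp_le)
  have "distinct_tuple_sum ?c l (?a + 1) ?b
      = (\<Sum>xs | length xs = l \<and> distinct xs \<and> set xs \<subseteq> ?A. \<Prod>j<l. ?c (xs ! j))"
    unfolding distinct_tuple_sum_def ..
  moreover have "0 \<le> t - s" "t - s + 1 \<le> t + 1" "sum ?c ?A \<le> t + 1"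
    using st cb upper by auto
  moreover note sum_prod_distinct_lists_upper_bounds[of ?A ?c "t - s" "?c ?b" "t + 1" l]
    and sum_prod_distinct_lists_lower_bound[of ?A ?c "?c ?a" "t - s" "t + 1" l]
  moreover have "(t - s + 1) ^ l \<le> (t + 1) ^ l"
    using st by (intro power_mono) auto
  moreover have "0 \<le> distinct_tuple_sum ?c l (?a + 1) ?b"
    unfolding distinct_tuple_sum_def using c_nonneg by (intro sum_nonneg prod_nonneg)
  ultimately show ?thesis
    using c_nonneg ca cb lower upper by simp
qed

end
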